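(* A set $S\subseteq S_n$ is symmetric if and only if the set system $A(S)$ is harmonic.
   Context: $\mathrm{Des}(w)=\{i: w(i)>w(i+1)\}$; $F_{n,D}=\sum x_{i_1}\cdots x_{i_n}$ over $i_1\le\cdots\le i_n$ with $i_j<i_{j+1}$ whenever $j\in D$; $S\subseteq S_n$ is symmetric if $Q(S)=\sum_{w\in S}F_{n,\mathrm{Des}(w)}$ is a symmetric function. A set system is $H=(U,(A_1,\dots,A_m))$ with $A_i\subseteq U$ (ordered). For $I\subseteq[m]$, $H_I=\bigcap_{i\in I}A_i$ (equal to $U$ if $I=\emptyset$). The run decomposition of a finite set $I$ of positive integers is the partition given by the sizes, in nonincreasing order, of the maximal runs of consecutive integers in $I$. $H$ is harmonic if $|H_I|=|H_J|$ for all $I,J\subseteq[m]$ with the same run decomposition. For $S\subseteq S_n$, $A(S)=(S,(A_1,\dots,A_{n-1}))$ with $A_i=\{\pi\in S:\pi(i)>\pi(i+1)\}$. *)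

theory Defs
  imports Main "HOL-Library.FuncSet" "HOL-Library.Multiset" "HOL-Combinatorics.Permutations"
begin

definition Des :: "nat \<Rightarrow> (nat \<Rightarrow> nat) \<Rightarrow> nat set" where
  "Des n w = {i \<in> {1..<n}. w i > w (Suc i)}"

text \<open>Formal power series in the countably many variables x_0, x_1, ... are
  represented by their coefficient functions on exponent vectors
  alpha :: nat => nat (the coefficient of the monomial prod_k x_k^(alpha k)).
  Coefficient of x^alpha in the fundamental quasisymmetric function F_{n,D}:
  the number of index sequences i_1 <= ... <= i_n, strict at positions in D,
  whose monomial x_{i_1}...x_{i_n} equals x^alpha.\<close>
definition F_coeff :: "nat \<Rightarrow> nat set \<Rightarrow> (nat \<Rightarrow> nat) \<Rightarrow> nat" where
  "F_coeff n D \<alpha> = card {i \<in> {1..n} \<rightarrow>\<^sub>E (UNIV :: nat set).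
      (\<forall>j\<in>{1..<n}. i j \<le> i (Suc j)) \<and>
      (\<forall>j\<in>D. i j < i (Suc j)) \<and>
      (\<forall>k. \<alpha> k = card {j \<in> {1..n}. i j = k})}"

definition Q_coeff :: "nat \<Rightarrow> (nat \<Rightarrow> nat) set \<Rightarrow> (nat \<Rightarrow> nat) \<Rightarrow> nat" where
  "Q_coeff n S \<alpha> = (\<Sum>w\<in>S. F_coeff n (Des n w) \<alpha>)"

text \<open>A formal power series is a symmetric function iff it is invariant under
  every permutation of the variables (coefficientwise).\<close>
definition symmetric_set :: "nat \<Rightarrow> (nat \<Rightarrow> nat) set \<Rightarrow> bool" where
  "symmetric_set n S \<longleftrightarrow>
     (\<forall>\<sigma> :: nat \<Rightarrow> nat. \<forall>\<alpha>. bij \<sigma> \<longrightarrow> Q_coeff n S (\<alpha> \<circ> \<sigma>) = Q_coeff n S \<alpha>)"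

definition max_runs :: "nat set \<Rightarrow> (nat \<times> nat) set" where
  "max_runs I = {(a, b). a \<le> b \<and> {a..b} \<subseteq> I \<and> a - 1 \<notin> I \<and> b + 1 \<notin> I}"

definition run_decomp :: "nat set \<Rightarrow> nat list" where
  "run_decomp I = rev (sorted_list_of_multiset (image_mset (\<lambda>(a, b). b - a + 1) (mset_set (max_runs I))))"

definition H_int :: "'a set \<Rightarrow> (nat \<Rightarrow> 'a set) \<Rightarrow> nat set \<Rightarrow> 'a set" where
  "H_int U A I = (if I = {} then U else (\<Inter>i\<in>I. A i))"

definition harmonic :: "'a set \<Rightarrow> (nat \<Rightarrow> 'a set) \<Rightarrow> nat \<Rightarrow> bool" where
  "harmonic U A m \<longleftrightarrow>
     (\<forall>I J. I \<subseteq> {1..m} \<longrightarrow> J \<subseteq> {1..m} \<longrightarrow> run_decomp I = run_decomp J \<longrightarrow>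
        card (H_int U A I) = card (H_int U A J))"

definition A_sets :: "nat \<Rightarrow> (nat \<Rightarrow> nat) set \<Rightarrow> nat \<Rightarrow> (nat \<Rightarrow> nat) set" where
  "A_sets n S i = {\<pi> \<in> S. \<pi> i > \<pi> (Suc i)}"

end

(*
  Let i = (i_1 <= ... <= i_n) be weakly increasing with exponent vector alpha, so that
  x_(i_1) ... x_(i_n) = x^alpha. The coefficient of x^alpha in F_(n,D) is 1 if D avoids the
  plateau set J(i) = {j. i_j = i_(j+1)} and 0 otherwise, and exponent vectors not of this form
  do not occur at all. So the coefficient of x^alpha in Q(S) is N(J(i)), the number of w in S
  without descents in J(i). The maximal runs of J(i) have the lengths alpha_k - 1 for the parts
  alpha_k >= 2, hence permuting the variables preserves exactly the run decomposition of J(i),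
  and every J in [n-1] is a plateau set: S is symmetric iff N(J) depends only on the run
  decomposition of J. By inclusion-exclusion, N and I |-> |H_I| are alternating-sum transforms
  of each other, and these transforms preserve such invariance, because two sets with the same
  run decomposition are related by a successor-preserving bijection, which maps every subset to
  one of the same size and run decomposition.
*)

theory Submission
  imports Defs
begin

section \<open>Weakly increasing sequences and the coefficients of Q(S)\<close>

definition weakly_incr :: "nat \<Rightarrow> (nat \<Rightarrow> nat) \<Rightarrow> bool" where
  "weakly_incr n i \<longleftrightarrow> (\<forall>j\<in>{1..<n}. i j \<le> i (Suc j))"

(* x_(i_1) ... x_(i_n) is the monomial x^alpha with alpha = count (content n i). *)
definition content :: "nat \<Rightarrow> (nat \<Rightarrow> nat) \<Rightarrow> nat multiset" where
  "content n i = image_mset i (mset_set {1..n})"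

definition plateaus :: "nat \<Rightarrow> (nat \<Rightarrow> nat) \<Rightarrow> nat set" where
  "plateaus n i = {j \<in> {1..<n}. i j = i (Suc j)}"

lemma weakly_incr_iff_sorted: "weakly_incr n i \<longleftrightarrow> sorted (map i [1..<Suc n])"
proof -
  have "sorted (map i [1..<Suc n]) \<longleftrightarrow> (\<forall>k. Suc k < n \<longrightarrow> i (Suc k) \<le> i (Suc (Suc k)))"
    by (simp add: sorted_iff_nth_Suc nth_map_upt del: upt_Suc)
  then show ?thesis
    unfolding weakly_incr_def by (auto simp: Ball_def gr0_conv_Suc Suc_le_eq)
qed

lemma mset_map_upt_eq_content: "mset (map i [1..<Suc n]) = content n i"
  by (simp add: content_def atLeastLessThanSuc_atLeastAtMost del: upt_Suc)

lemma count_content: "count (content n i) k = card {j \<in> {1..n}. i j = k}"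
  by (simp add: content_def count_image_mset_eq_card_vimage)

lemma size_content [simp]: "size (content n i) = n"
  by (simp add: content_def)

lemma weakly_incr_le:
  assumes "weakly_incr n i" "1 \<le> j" "j \<le> j'" "j' \<le> n"
  shows "i j \<le> i j'"
proof -
  have "map i [1..<Suc n] ! (j - 1) \<le> map i [1..<Suc n] ! (j' - 1)"
    using assms by (intro sorted_nth_mono) (auto simp: weakly_incr_iff_sorted simp del: upt_Suc)
  then show ?thesis
    using assms(2-4) by (simp add: nth_map_upt del: upt_Suc)
qed

lemma weakly_incr_content_unique:
  assumes "weakly_incr n i" "weakly_incr n i'" "content n i = content n i'" "j \<in> {1..n}"
  shows "i j = i' j"
proof -
  have "map i [1..<Suc n] = map i' [1..<Suc n]"
    using assms(1-3) properties_for_sort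
    by (metis mset_map_upt_eq_content weakly_incr_iff_sorted)
  then show ?thesis
    using assms(4) by (simp del: upt_Suc)
qed

lemma weakly_incr_with_content:
  assumes "size c = n"
  obtains i where "weakly_incr n i" "content n i = c"
proof
  define xs where "xs = sorted_list_of_multiset c"
  have xs: "length xs = n" "sorted xs" "mset xs = c"
    using assms by (simp_all add: xs_def flip: size_mset)
  have "map (\<lambda>j. xs ! (j - 1)) [1..<Suc n] = xs"
    using xs(1) by (intro nth_equalityI) (simp_all del: upt_Suc)
  then show "weakly_incr n (\<lambda>j. xs ! (j - 1))" "content n (\<lambda>j. xs ! (j - 1)) = c"
    using xs by (simp_all add: weakly_incr_iff_sorted flip: mset_map_upt_eq_content)
qed

lemma weakly_incr_restrict: "weakly_incr n (restrict i {1..n}) \<longleftrightarrow> weakly_incr n i"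
  by (simp add: weakly_incr_def)

lemma content_restrict: "content n (restrict i {1..n}) = content n i"
  by (auto simp: content_def intro: image_mset_cong)

lemma F_coeff_content:
  assumes "weakly_incr n i" "D \<subseteq> {1..<n}"
  shows "F_coeff n D (count (content n i)) = (if D \<inter> plateaus n i = {} then 1 else 0)"
proof -
  let ?T = "{i' \<in> {1..n} \<rightarrow>\<^sub>E UNIV. weakly_incr n i' \<and> (\<forall>j\<in>D. i' j < i' (Suc j)) \<and>
              count (content n i) = count (content n i')}"
  have "i' \<in> ?T \<longleftrightarrow> i' = restrict i {1..n} \<and> D \<inter> plateaus n i = {}" for i'
  proof
    assume i': "i' \<in> ?T"
    then have "i j = i' j" if "j \<in> {1..n}" for j
      using weakly_incr_content_unique[OF assms(1), of i' j] that by (simp add: multiset_eqI)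
    then have "i' = restrict i {1..n}"
      using i' by (auto simp: PiE_def extensional_def)
    moreover have "D \<inter> plateaus n i = {}"
      using i' assms(2) \<open>i' = restrict i {1..n}\<close> by (fastforce simp: plateaus_def)
    ultimately show "i' = restrict i {1..n} \<and> D \<inter> plateaus n i = {}" ..
  next
    assume i': "i' = restrict i {1..n} \<and> D \<inter> plateaus n i = {}"
    have "i j < i (Suc j)" if "j \<in> D" for j
      using i' that assms unfolding weakly_incr_def plateaus_def
      by (metis (mono_tags, lifting) disjoint_iff mem_Collect_eq order_less_le subsetD)
    then show "i' \<in> ?T"
      using i' assms(1,2) weakly_incr_restrict content_restrict by auto
  qed
  then have "?T = (if D \<inter> plateaus n i = {} then {restrict i {1..n}} else {})"
    by auto
  moreover have "F_coeff n D (count (content n i)) = card ?T"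
    unfolding F_coeff_def weakly_incr_def count_content fun_eq_iff by metis
  ultimately show ?thesis
    by simp
qed

lemma F_coeff_eq_0:
  assumes "\<nexists>c. size c = n \<and> count c = \<alpha>"
  shows "F_coeff n D \<alpha> = 0"
proof -
  have "\<not> (\<forall>k. \<alpha> k = card {j \<in> {1..n}. i j = k})" for i
    using assms size_content by (metis count_content ext)
  then have "{i \<in> {1..n} \<rightarrow>\<^sub>E UNIV. (\<forall>j\<in>{1..<n}. i j \<le> i (Suc j)) \<and> (\<forall>j\<in>D. i j < i (Suc j)) \<and>
      (\<forall>k. \<alpha> k = card {j \<in> {1..n}. i j = k})} = {}"
    by blast
  then show ?thesis
    unfolding F_coeff_def by (simp only: card.empty)
qed

definition no_descent_in :: "(nat \<Rightarrow> nat) set \<Rightarrow> nat set \<Rightarrow> (nat \<Rightarrow> nat) set" where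
  "no_descent_in S J = {w \<in> S. \<forall>j \<in> J. \<not> w (Suc j) < w j}"

lemma Q_coeff_content:
  assumes "weakly_incr n i" "finite S"
  shows "Q_coeff n S (count (content n i)) = card (no_descent_in S (plateaus n i))"
proof -
  have "Des n w \<inter> plateaus n i = {} \<longleftrightarrow> (\<forall>j \<in> plateaus n i. \<not> w (Suc j) < w j)" for w
    by (auto simp: Des_def plateaus_def)
  moreover have "Des n w \<subseteq> {1..<n}" for w
    by (auto simp: Des_def)
  ultimately have "Q_coeff n S (count (content n i)) =
      (\<Sum>w\<in>S. if \<forall>j \<in> plateaus n i. \<not> w (Suc j) < w j then 1 else 0)"
    unfolding Q_coeff_def using F_coeff_content[OF assms(1)] by (intro sum.cong) auto
  then show ?thesis
    using assms(2) by (simp add: sum.If_cases Int_def no_descent_in_def)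
qed

lemma Q_coeff_eq_0: "\<nexists>c. size c = n \<and> count c = \<alpha> \<Longrightarrow> Q_coeff n S \<alpha> = 0"
  by (simp add: Q_coeff_def F_coeff_eq_0)

section \<open>Multiplicities of a multiset\<close>

(* For alpha = count c these are the nonzero parts of alpha, i.e. the partition of x^alpha. *)
definition multiplicities :: "'a multiset \<Rightarrow> nat multiset" where
  "multiplicities c = image_mset (count c) (mset_set (set_mset c))"

lemma sum_mset_multiplicities: "sum_mset (multiplicities c) = size c"
  by (simp add: multiplicities_def size_multiset_overloaded_eq sum_unfold_sum_mset)

lemma size_multiplicities: "size (multiplicities c) = card (set_mset c)"
  by (simp add: multiplicities_def)

lemma zero_not_in_multiplicities: "0 \<notin># multiplicities c"
  by (auto simp: multiplicities_def count_eq_zero_iff)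

lemma count_image_mset_inj:
  assumes "inj f"
  shows "count (image_mset f c) (f x) = count c x"
proof -
  have "f -` {f x} = {x}"
    using assms by (auto dest: injD)
  then show ?thesis
    by (cases "x \<in># c") (simp_all add: count_image_mset count_eq_zero_iff)
qed

lemma multiplicities_image_mset:
  assumes "inj f"
  shows "multiplicities (image_mset f c) = multiplicities c"
proof -
  have "mset_set (set_mset (image_mset f c)) = image_mset f (mset_set (set_mset c))"
    using assms by (simp add: image_mset_mset_set inj_on_subset)
  then show ?thesis
    using assms by (simp add: multiplicities_def multiset.map_comp comp_def count_image_mset_inj)
qed

lemma multiplicities_eqI:
  assumes "size c = size c'"
    and "filter_mset ((\<le>) 2) (multiplicities c) = filter_mset ((\<le>) 2) (multiplicities c')"
  shows "multiplicities c = multiplicities c'"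
proof -
  have split: "M = filter_mset ((\<le>) 2) M + replicate_mset (count M 1) 1"
    if "0 \<notin># M" for M :: "nat multiset"
  proof -
    have "filter_mset (\<lambda>v. \<not> 2 \<le> v) M = filter_mset (\<lambda>v. v = 1) M"
      using that by (intro filter_mset_cong) (auto simp: not_le less_2_cases_iff)
    then show ?thesis
      using multiset_partition[of M "(\<le>) 2"] by (simp add: filter_eq_replicate_mset)
  qed
  let ?M = "multiplicities c" and ?M' = "multiplicities c'"
  have M: "?M = filter_mset ((\<le>) 2) ?M + replicate_mset (count ?M 1) 1"
    and M': "?M' = filter_mset ((\<le>) 2) ?M' + replicate_mset (count ?M' 1) 1"
    by (rule split, rule zero_not_in_multiplicities)+
  have "sum_mset (filter_mset ((\<le>) 2) ?M) + count ?M 1 =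
      sum_mset (filter_mset ((\<le>) 2) ?M') + count ?M' 1"
    using arg_cong[OF M, of sum_mset] arg_cong[OF M', of sum_mset] assms(1)
    by (simp add: sum_mset_multiplicities)
  then have "count ?M 1 = count ?M' 1"
    using assms(2) by simp
  then show ?thesis
    using M M' assms(2) by simp
qed

lemma count_comp_bij:
  assumes "bij \<sigma>"
  shows "count c \<circ> \<sigma> = count (image_mset (inv \<sigma>) c)"
proof
  fix x
  have "count (image_mset (inv \<sigma>) c) x = count (image_mset (inv \<sigma>) c) (inv \<sigma> (\<sigma> x))"
    using assms by (simp add: bij_is_inj)
  also have "\<dots> = count c (\<sigma> x)"
    using assms by (intro count_image_mset_inj) (simp add: bij_imp_bij_inv bij_is_inj)
  finally show "(count c \<circ> \<sigma>) x = count (image_mset (inv \<sigma>) c) x"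
    by simp
qed

lemma bij_count_eq_if_multiplicities_eq:
  fixes c c' :: "'a multiset"
  assumes "multiplicities c = multiplicities c'"
  obtains \<sigma> where "bij \<sigma>" "count c' = count c \<circ> \<sigma>"
proof -
  define B where "B = set_mset c \<union> set_mset c'"
  have image_count: "image_mset (count d) (mset_set B) =
      multiplicities d + replicate_mset (card B - card (set_mset d)) 0" if "set_mset d \<subseteq> B" for d
  proof -
    have "mset_set B = mset_set (set_mset d) + mset_set (B - set_mset d)"
      using that
      by (metis B_def Diff_disjoint Diff_partition finite_Diff finite_Un finite_set_mset mset_set_Union)
    moreover have "image_mset (count d) (mset_set (B - set_mset d)) =
        replicate_mset (card (B - set_mset d)) 0"
      by (subst image_mset_cong[where g = "\<lambda>_. 0"])
        (auto simp: count_eq_zero_iff image_mset_const_eq B_def)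
    ultimately show ?thesis
      using that by (simp add: multiplicities_def card_Diff_subset)
  qed
  have "card (set_mset c) = card (set_mset c')"
    using assms by (metis size_multiplicities)
  then have "image_mset (count c') (mset_set B) = image_mset (count c) (mset_set B)"
    using image_count[of c] image_count[of c'] assms by (simp add: B_def)
  moreover have "finite B"
    by (simp add: B_def)
  ultimately obtain p where p: "p permutes B" "\<forall>x\<in>B. count c' x = count c (p x)"
    using image_mset_eq_implies_permutes by blast
  have "count c' x = count c (p x)" for x
    using p by (cases "x \<in> B") (simp_all add: permutes_not_in B_def not_in_iff)
  then show thesis
    using that permutes_bij[OF p(1)] by (simp add: fun_eq_iff)
qed

section \<open>Maximal runs\<close>

definition run_lengths :: "nat set \<Rightarrow> nat multiset" where
  "run_lengths X = image_mset (\<lambda>(a, b). b - a + 1) (mset_set (max_runs X))"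

lemma run_decomp_eq_iff: "run_decomp I = run_decomp J \<longleftrightarrow> run_lengths I = run_lengths J"
  by (metis run_decomp_def run_lengths_def mset_rev mset_sorted_list_of_multiset)

lemma finite_max_runs: "finite X \<Longrightarrow> finite (max_runs X)"
  by (rule finite_subset[of _ "X \<times> X"]) (auto simp: max_runs_def)

lemma max_runsD:
  assumes "r \<in> max_runs X"
  shows "fst r \<le> snd r" "{fst r..snd r} \<subseteq> X" "fst r - 1 \<notin> X" "snd r + 1 \<notin> X"
  using assms by (auto simp: max_runs_def)

lemma max_runs_unique:
  assumes "r \<in> max_runs X" "s \<in> max_runs X" "fst r \<le> x" "x \<le> snd r" "fst s \<le> x" "x \<le> snd s"
  shows "r = s"
proof -
  have "fst r \<le> fst s \<and> snd r \<le> snd s"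
    if "r \<in> max_runs X" "s \<in> max_runs X" "fst r \<le> x" "x \<le> snd r" "fst s \<le> x" "x \<le> snd s" for r s
  proof -
    have "fst r \<in> X" "fst r - 1 \<notin> X" "snd s + 1 \<notin> X" "{fst s..snd s} \<subseteq> X" "{fst r..snd r} \<subseteq> X"
      using max_runsD[OF that(1)] max_runsD[OF that(2)] by auto
    then have "fst r - 1 \<notin> {fst s..snd s}" "snd s + 1 \<notin> {fst r..snd r}"
      by blast+
    moreover have "fst r \<noteq> 0"
      using \<open>fst r \<in> X\<close> \<open>fst r - 1 \<notin> X\<close> by (metis diff_0_eq_0)
    ultimately show ?thesis
      using that(3-6) by auto
  qed
  from this[OF assms] this[OF assms(2,1,5,6,3,4)] show ?thesis
    by (simp add: prod_eq_iff)
qed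

lemma run_left_end:
  fixes X :: "nat set"
  assumes "0 \<notin> X" "x \<in> X"
  shows "\<exists>a \<le> x. {a..x} \<subseteq> X \<and> a - 1 \<notin> X"
  using assms(2)
proof (induction x)
  case 0
  then show ?case
    using assms(1) by simp
next
  case (Suc x)
  show ?case
  proof (cases "x \<in> X")
    case True
    then obtain a where "a \<le> x" "{a..x} \<subseteq> X" "a - 1 \<notin> X"
      using Suc.IH by blast
    then show ?thesis
      using Suc.prems by (intro exI[of _ a]) (auto simp: le_Suc_eq)
  next
    case False
    then show ?thesis
      using Suc.prems by (intro exI[of _ "Suc x"]) auto
  qed
qed

lemma run_right_end:
  fixes X :: "nat set"
  assumes "finite X" "x \<in> X"
  shows "\<exists>b \<ge> x. {x..b} \<subseteq> X \<and> b + 1 \<notin> X"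
proof (rule ccontr)
  assume no_end: "\<not> ?thesis"
  have "{x..x + k} \<subseteq> X" for k
  proof (induction k)
    case (Suc k)
    then have "x + k + 1 \<in> X"
      using no_end by auto
    then show ?case
      using Suc by (auto simp: le_Suc_eq)
  qed (use assms(2) in simp)
  then have "{x..} \<subseteq> X"
    by (metis atLeastAtMost_iff atLeast_iff le_add_diff_inverse subsetD subsetI order_refl)
  then show False
    using assms(1) infinite_Ici finite_subset by blast
qed

(* 0 \<notin> X is needed: since 0 - 1 = 0, no maximal run can contain 0. *)
lemma max_runs_cover:
  assumes "finite X" "0 \<notin> X" "x \<in> X"
  shows "\<exists>r \<in> max_runs X. fst r \<le> x \<and> x \<le> snd r"
proof -
  obtain a b where a: "a \<le> x" "{a..x} \<subseteq> X" "a - 1 \<notin> X" and b: "x \<le> b" "{x..b} \<subseteq> X" "b + 1 \<notin> X"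
    using run_left_end[OF assms(2,3)] run_right_end[OF assms(1,3)] by blast
  have "{a..b} \<subseteq> {a..x} \<union> {x..b}"
    by auto
  then have "(a, b) \<in> max_runs X"
    using a b by (auto simp: max_runs_def)
  with a(1) b(1) show ?thesis
    by (intro bexI[of _ "(a, b)"]) simp_all
qed

definition run_of :: "nat set \<Rightarrow> nat \<Rightarrow> nat \<times> nat" where
  "run_of X x = (THE r. r \<in> max_runs X \<and> fst r \<le> x \<and> x \<le> snd r)"

lemma run_of_eq:
  assumes "r \<in> max_runs X" "fst r \<le> x" "x \<le> snd r"
  shows "run_of X x = r"
  unfolding run_of_def using assms max_runs_unique[OF _ assms(1)] by (intro the_equality) auto

lemma run_of_in_max_runs:
  assumes "finite X" "0 \<notin> X" "x \<in> X"
  shows "run_of X x \<in> max_runs X"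
  using max_runs_cover[OF assms] run_of_eq by force

lemma run_of_bounds:
  assumes "finite X" "0 \<notin> X" "x \<in> X"
  shows "fst (run_of X x) \<le> x" "x \<le> snd (run_of X x)"
  using max_runs_cover[OF assms] run_of_eq by force+

lemma run_of_Suc:
  assumes "finite X" "0 \<notin> X" "x \<in> X" "Suc x \<in> X"
  shows "run_of X (Suc x) = run_of X x"
proof -
  have "snd (run_of X x) \<noteq> x"
    using max_runsD(4)[OF run_of_in_max_runs[OF assms(1-3)]] assms(4) by auto
  then show ?thesis
    using run_of_in_max_runs[OF assms(1-3)] run_of_bounds[OF assms(1-3)] by (intro run_of_eq) auto
qed

section \<open>Plateaus\<close>

lemma weakly_incr_fiber_convex:
  assumes "weakly_incr n i" "j \<in> {1..n}" "j' \<in> {1..n}" "i j' = i j" "j \<le> m" "m \<le> j'"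
  shows "i m = i j"
  using weakly_incr_le[OF assms(1), of j m] weakly_incr_le[OF assms(1), of m j'] assms(2-6) by auto

lemma weakly_incr_fiber_interval:
  assumes incr: "weakly_incr n i" and F: "F = {j \<in> {1..n}. i j = k}" and "F \<noteq> {}"
  shows "F = {Min F..Max F}"
proof (intro equalityI subsetI)
  have fin: "finite F"
    using F by simp
  have "Min F \<in> F" "Max F \<in> F"
    using Min_in[OF fin] Max_in[OF fin] \<open>F \<noteq> {}\<close> by blast+
  then have ends: "Min F \<in> {1..n}" "Max F \<in> {1..n}" "i (Min F) = k" "i (Max F) = k"
    using F by auto
  fix m
  show "m \<in> {Min F..Max F}" if "m \<in> F"
    using Min_le[OF fin that] Max_ge[OF fin that] by simp
  show "m \<in> F" if "m \<in> {Min F..Max F}"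
  proof -
    have "i m = k"
      using weakly_incr_fiber_convex[OF incr, of "Min F" "Max F" m] ends that by simp
    moreover have "m \<in> {1..n}"
      using ends(1,2) that by auto
    ultimately show ?thesis
      using F by simp
  qed
qed

lemma plateaus_run_const:
  assumes "{a..b} \<subseteq> plateaus n i" "j \<in> {a..Suc b}"
  shows "i j = i a"
  using assms(2)
proof (induction j)
  case (Suc j)
  show ?case
  proof (cases "Suc j = a")
    case False
    then have "j \<in> plateaus n i" "i j = i a"
      using Suc assms(1) by auto
    then show ?thesis
      by (simp add: plateaus_def)
  qed simp
qed simp

lemma max_run_plateausD:
  assumes incr: "weakly_incr n i" and run: "(a, b) \<in> max_runs (plateaus n i)"
  shows "a \<le> b" "{j \<in> {1..n}. i j = i a} = {a..Suc b}"
proof -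
  have ab: "a \<le> b" "{a..b} \<subseteq> plateaus n i" "a - 1 \<notin> plateaus n i" "b + 1 \<notin> plateaus n i"
    using run by (simp_all add: max_runs_def)
  then have bounds: "1 \<le> a" "Suc b \<le> n"
    by (auto simp: plateaus_def)
  have const: "i j = i a" if "j \<in> {a..Suc b}" for j
    using plateaus_run_const[OF ab(2) that] .
  have "j \<in> {a..Suc b}" if "j \<in> {1..n}" "i j = i a" for j
  proof (rule ccontr)
    assume "j \<notin> {a..Suc b}"
    then consider "j < a" | "Suc b < j"
      by fastforce
    then show False
    proof cases
      case 1
      then have "i (a - 1) = i a"
        using weakly_incr_fiber_convex[OF incr, of j a "a - 1"] that bounds ab(1) by auto
      then show False
        using ab(1,3) 1 that bounds by (auto simp: plateaus_def)
    next
      case 2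
      then have "i (Suc (Suc b)) = i a"
        using weakly_incr_fiber_convex[OF incr, of a j "Suc (Suc b)"] that bounds ab(1) by auto
      then show False
        using ab(1,4) 2 that const[of "Suc b"] bounds by (auto simp: plateaus_def)
    qed
  qed
  moreover have "j \<in> {1..n} \<and> i j = i a" if "j \<in> {a..Suc b}" for j
    using that const[OF that] bounds by simp
  ultimately show "a \<le> b" "{j \<in> {1..n}. i j = i a} = {a..Suc b}"
    using ab(1) by blast+
qed

lemma max_run_plateausI:
  assumes "a \<le> b" "{j \<in> {1..n}. i j = i a} = {a..Suc b}"
  shows "(a, b) \<in> max_runs (plateaus n i)"
proof -
  have fiber: "j \<in> {1..n} \<and> i j = i a \<longleftrightarrow> j \<in> {a..Suc b}" for j
    using assms(2) by blast
  from fiber[of a] fiber[of "Suc b"] assms(1) have bounds: "1 \<le> a" "Suc b \<le> n"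
    by auto
  have "j \<in> plateaus n i" if "j \<in> {a..b}" for j
    using fiber[of j] fiber[of "Suc j"] that bounds by (auto simp: plateaus_def)
  moreover have "a - 1 \<notin> plateaus n i"
    using fiber[of "a - 1"] fiber[of a] assms(1) by (auto simp: plateaus_def)
  moreover have "b + 1 \<notin> plateaus n i"
    using fiber[of "Suc b"] fiber[of "Suc (Suc b)"] assms(1) by (auto simp: plateaus_def)
  ultimately show ?thesis
    using assms(1) by (auto simp: max_runs_def)
qed

lemma max_runs_plateaus_iff:
  "weakly_incr n i \<Longrightarrow>
     (a, b) \<in> max_runs (plateaus n i) \<longleftrightarrow> a \<le> b \<and> {j \<in> {1..n}. i j = i a} = {a..Suc b}"
  using max_run_plateausD max_run_plateausI by blast

lemma bij_betw_max_runs_plateaus: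
  assumes incr: "weakly_incr n i"
  shows "bij_betw (\<lambda>(a, b). i a) (max_runs (plateaus n i))
           {k \<in> set_mset (content n i). 2 \<le> count (content n i) k}"
  unfolding bij_betw_def
proof
  let ?R = "max_runs (plateaus n i)" and ?c = "content n i"
  define F where "F k = {j \<in> {1..n}. i j = k}" for k
  have run_iff: "(a, b) \<in> ?R \<longleftrightarrow> a \<le> b \<and> F (i a) = {a..Suc b}" for a b
    unfolding F_def by (rule max_runs_plateaus_iff[OF incr])
  have count_c: "count ?c k = card (F k)" for k
    by (simp add: F_def count_content)
  show "inj_on (\<lambda>(a, b). i a) ?R"
    by (intro inj_onI) (auto simp: run_iff)
  show "(\<lambda>(a, b). i a) ` ?R = {k \<in> set_mset ?c. 2 \<le> count ?c k}"
  proof (intro equalityI subsetI)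
    fix k assume "k \<in> (\<lambda>(a, b). i a) ` ?R"
    then obtain a b where "(a, b) \<in> ?R" "k = i a"
      by auto
    then have "count ?c k \<ge> 2"
      by (auto simp: run_iff count_c)
    then show "k \<in> {k \<in> set_mset ?c. 2 \<le> count ?c k}"
      by (simp flip: count_greater_zero_iff)
  next
    fix k assume "k \<in> {k \<in> set_mset ?c. 2 \<le> count ?c k}"
    then have two: "2 \<le> card (F k)"
      by (simp add: count_c)
    define l r where "l = Min (F k)" and "r = Max (F k)"
    have "F k \<noteq> {}"
      using two by (cases "F k = {}") simp_all
    then have Fk: "F k = {l..r}"
      unfolding l_def r_def by (rule weakly_incr_fiber_interval[OF incr F_def])
    then have "l < r"
      using two by simp
    then have "l \<in> F k"
      using Fk by simp
    then have "i l = k"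
      by (simp add: F_def)
    then have "(l, r - 1) \<in> ?R"
      using Fk \<open>l < r\<close> by (simp add: run_iff)
    then show "k \<in> (\<lambda>(a, b). i a) ` ?R"
      using \<open>i l = k\<close> by force
  qed
qed

lemma run_lengths_plateaus:
  assumes incr: "weakly_incr n i"
  shows "image_mset Suc (run_lengths (plateaus n i)) =
           filter_mset ((\<le>) 2) (multiplicities (content n i))"
proof -
  let ?R = "max_runs (plateaus n i)" and ?c = "content n i"
  have "finite ?R"
    by (rule finite_max_runs) (simp add: plateaus_def)
  have "Suc (b - a + 1) = count ?c (i a)" if "(a, b) \<in> ?R" for a b
    using max_runs_plateaus_iff[OF incr] that by (auto simp: count_content)
  then have "image_mset Suc (run_lengths (plateaus n i)) =
      image_mset (\<lambda>(a, b). count ?c (i a)) (mset_set ?R)"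
    unfolding run_lengths_def multiset.map_comp using \<open>finite ?R\<close> by (intro image_mset_cong) auto
  also have "\<dots> = image_mset (count ?c) (image_mset (\<lambda>(a, b). i a) (mset_set ?R))"
    by (simp add: multiset.map_comp comp_def split_def)
  also have "\<dots> = image_mset (count ?c) (mset_set {k \<in> set_mset ?c. 2 \<le> count ?c k})"
    using bij_betw_max_runs_plateaus[OF incr] by (simp add: image_mset_mset_set bij_betw_def)
  also have "\<dots> = filter_mset ((\<le>) 2) (multiplicities ?c)"
    by (simp add: multiplicities_def filter_mset_image_mset)
  finally show ?thesis .
qed

section \<open>Symmetry as invariance under the run decomposition\<close>

definition plateau_seq :: "nat set \<Rightarrow> nat \<Rightarrow> nat" where
  "plateau_seq J j = card ({1..<j} - J)"

lemma plateau_seq_Suc: "1 \<le> j \<Longrightarrow> plateau_seq J (Suc j) = plateau_seq J j + (if j \<in> J then 0 else 1)"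
proof -
  assume "1 \<le> j"
  then have "{1..<Suc j} - J = (if j \<in> J then {1..<j} - J else insert j ({1..<j} - J))"
    by (auto simp: less_Suc_eq)
  then show ?thesis
    by (simp add: plateau_seq_def)
qed

lemma weakly_incr_plateau_seq: "weakly_incr n (plateau_seq J)"
  by (simp add: weakly_incr_def plateau_seq_Suc)

lemma plateaus_plateau_seq: "J \<subseteq> {1..<n} \<Longrightarrow> plateaus n (plateau_seq J) = J"
  by (auto simp: plateaus_def plateau_seq_Suc split: if_splits)

lemma plateaus_subset: "plateaus n i \<subseteq> {1..n - 1}"
  by (auto simp: plateaus_def)

lemma ex_count_comp_bij_iff:
  assumes "bij \<sigma>"
  shows "(\<exists>c. size c = n \<and> count c = \<alpha> \<circ> \<sigma>) \<longleftrightarrow> (\<exists>c. size c = n \<and> count c = \<alpha>)"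
proof
  assume "\<exists>c. size c = n \<and> count c = \<alpha> \<circ> \<sigma>"
  then obtain c where "size c = n" "count c = \<alpha> \<circ> \<sigma>"
    by blast
  moreover have "\<alpha> \<circ> \<sigma> \<circ> inv \<sigma> = \<alpha>"
    using assms by (simp add: comp_def bij_is_surj surj_f_inv_f)
  ultimately show "\<exists>c. size c = n \<and> count c = \<alpha>"
    using count_comp_bij[OF bij_imp_bij_inv[OF assms], of c] assms
    by (intro exI[of _ "image_mset \<sigma> c"]) (simp add: inv_inv_eq)
next
  assume "\<exists>c. size c = n \<and> count c = \<alpha>"
  then show "\<exists>c. size c = n \<and> count c = \<alpha> \<circ> \<sigma>"
    using count_comp_bij[OF assms] by (metis size_image_mset)
qed

definition run_invariant :: "nat \<Rightarrow> (nat set \<Rightarrow> 'a) \<Rightarrow> bool" where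
  "run_invariant m f \<longleftrightarrow>
     (\<forall>X Y. X \<subseteq> {1..m} \<longrightarrow> Y \<subseteq> {1..m} \<longrightarrow> run_lengths X = run_lengths Y \<longrightarrow> f X = f Y)"

lemma run_invariant_cong:
  "(\<And>X. X \<subseteq> {1..m} \<Longrightarrow> f X = g X) \<Longrightarrow> run_invariant m f \<longleftrightarrow> run_invariant m g"
  by (simp add: run_invariant_def)

lemma harmonic_iff_run_invariant: "harmonic U A m \<longleftrightarrow> run_invariant m (\<lambda>I. card (H_int U A I))"
  by (simp add: harmonic_def run_invariant_def run_decomp_eq_iff)

lemma run_invariant_if_symmetric_set:
  assumes sym: "symmetric_set n S" and "finite S"
  shows "run_invariant (n - 1) (\<lambda>J. card (no_descent_in S J))"
  unfolding run_invariant_def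
proof (intro allI impI)
  fix J J' assume J: "J \<subseteq> {1..n - 1}" "J' \<subseteq> {1..n - 1}" "run_lengths J = run_lengths J'"
  moreover have "{1..n - 1} = {1..<n}"
    by auto
  ultimately have plateaus: "plateaus n (plateau_seq J) = J" "plateaus n (plateau_seq J') = J'"
    by (simp_all add: plateaus_plateau_seq)
  let ?c = "content n (plateau_seq J)" and ?c' = "content n (plateau_seq J')"
  have "filter_mset ((\<le>) 2) (multiplicities ?c) = filter_mset ((\<le>) 2) (multiplicities ?c')"
    using run_lengths_plateaus[OF weakly_incr_plateau_seq, of n] plateaus J(3) by metis
  then have "multiplicities ?c = multiplicities ?c'"
    by (intro multiplicities_eqI) simp_all
  then obtain \<sigma> where "bij \<sigma>" "count ?c' = count ?c \<circ> \<sigma>"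
    by (rule bij_count_eq_if_multiplicities_eq)
  then have "Q_coeff n S (count ?c') = Q_coeff n S (count ?c)"
    using sym by (simp add: symmetric_set_def)
  then show "card (no_descent_in S J) = card (no_descent_in S J')"
    using Q_coeff_content[OF weakly_incr_plateau_seq \<open>finite S\<close>] plateaus by simp
qed

lemma symmetric_set_if_run_invariant:
  assumes inv: "run_invariant (n - 1) (\<lambda>J. card (no_descent_in S J))" and "finite S"
  shows "symmetric_set n S"
  unfolding symmetric_set_def
proof (intro allI impI)
  fix \<sigma> \<alpha> :: "nat \<Rightarrow> nat" assume "bij \<sigma>"
  show "Q_coeff n S (\<alpha> \<circ> \<sigma>) = Q_coeff n S \<alpha>"
  proof (cases "\<exists>c. size c = n \<and> count c = \<alpha>")
    case True
    then obtain i where i: "weakly_incr n i" "count (content n i) = \<alpha>"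
      by (metis weakly_incr_with_content)
    obtain i' where i': "weakly_incr n i'" "content n i' = image_mset (inv \<sigma>) (content n i)"
      by (rule weakly_incr_with_content[of "image_mset (inv \<sigma>) (content n i)" n]) simp
    have "multiplicities (content n i') = multiplicities (content n i)"
      using i'(2) \<open>bij \<sigma>\<close> by (simp add: multiplicities_image_mset bij_imp_bij_inv bij_is_inj)
    then have "image_mset Suc (run_lengths (plateaus n i')) =
        image_mset Suc (run_lengths (plateaus n i))"
      by (simp add: run_lengths_plateaus i(1) i'(1))
    then have "run_lengths (plateaus n i') = run_lengths (plateaus n i)"
      by (rule injD[OF multiset.inj_map[OF inj_Suc]])
    then have "card (no_descent_in S (plateaus n i')) = card (no_descent_in S (plateaus n i))"
      using inv plateaus_subset[of n] unfolding run_invariant_def by blast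
    moreover have "\<alpha> \<circ> \<sigma> = count (content n i')"
      using i(2) i'(2) count_comp_bij[OF \<open>bij \<sigma>\<close>, of "content n i"] by simp
    ultimately show ?thesis
      using Q_coeff_content[OF i(1) \<open>finite S\<close>] Q_coeff_content[OF i'(1) \<open>finite S\<close>] i(2) by simp
  next
    case False
    then show ?thesis
      using ex_count_comp_bij_iff[OF \<open>bij \<sigma>\<close>] by (simp add: Q_coeff_eq_0)
  qed
qed

lemma symmetric_set_iff_run_invariant:
  "finite S \<Longrightarrow> symmetric_set n S \<longleftrightarrow> run_invariant (n - 1) (\<lambda>J. card (no_descent_in S J))"
  using symmetric_set_if_run_invariant run_invariant_if_symmetric_set by blast

section \<open>Successor-preserving bijections\<close>

lemma bij_betw_if_image_mset_eq:
  assumes "finite A" "finite B" "image_mset f (mset_set A) = image_mset g (mset_set B)"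
  obtains \<psi> where "bij_betw \<psi> A B" "\<forall>a\<in>A. g (\<psi> a) = f a"
  using assms
proof (induction A arbitrary: B thesis rule: finite_induct)
  case empty
  then have "B = {}"
    by (metis image_mset_is_empty_iff mset_set_empty_iff mset_set.empty)
  then show ?case
    using empty.prems(1) by (simp add: bij_betw_def)
next
  case (insert a A)
  have "f a \<in># image_mset g (mset_set B)"
    using insert.prems(3) insert.hyps by (simp flip: insert.prems(3))
  then obtain b where b: "b \<in> B" "g b = f a"
    using insert.prems(2) by auto
  have "mset_set B = add_mset b (mset_set (B - {b}))"
    using b(1) insert.prems(2) by (simp add: mset_set.remove)
  then have "image_mset f (mset_set A) = image_mset g (mset_set (B - {b}))"
    using insert.prems(3) insert.hyps b(2) by simp
  then obtain \<psi> where \<psi>: "bij_betw \<psi> A (B - {b})" "\<forall>x\<in>A. g (\<psi> x) = f x"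
    using insert.IH[OF _ finite_Diff[OF insert.prems(2)]] by blast
  have "bij_betw (\<psi>(a := b)) A (B - {b}) \<longleftrightarrow> bij_betw \<psi> A (B - {b})"
    by (rule bij_betw_cong) (use insert.hyps(2) in auto)
  then have "bij_betw (\<psi>(a := b)) (A \<union> {a}) ((B - {b}) \<union> {b})"
    using \<psi>(1) by (intro bij_betw_combine) (simp_all add: bij_betw_singletonI)
  then have "bij_betw (\<psi>(a := b)) (insert a A) B"
    using b(1) by (simp add: insert_absorb)
  moreover have "\<forall>x\<in>insert a A. g ((\<psi>(a := b)) x) = f x"
    using \<psi>(2) b(2) insert.hyps(2) by auto
  ultimately show ?case
    by (rule insert.prems(1))
qed

definition preserves_succ :: "(nat \<Rightarrow> nat) \<Rightarrow> nat set \<Rightarrow> bool" where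
  "preserves_succ \<phi> X \<longleftrightarrow> (\<forall>x\<in>X. \<forall>y\<in>X. y = Suc x \<longleftrightarrow> \<phi> y = Suc (\<phi> x))"

(* Translates each maximal run of X onto the run of X' that \<psi> assigns to it. *)
definition run_shift :: "nat set \<Rightarrow> (nat \<times> nat \<Rightarrow> nat \<times> nat) \<Rightarrow> nat \<Rightarrow> nat" where
  "run_shift X \<psi> x = fst (\<psi> (run_of X x)) + (x - fst (run_of X x))"

context
  fixes X X' :: "nat set" and \<psi> :: "nat \<times> nat \<Rightarrow> nat \<times> nat"
  assumes fin: "finite X" "finite X'" and pos: "0 \<notin> X" "0 \<notin> X'"
    and \<psi>: "bij_betw \<psi> (max_runs X) (max_runs X')"
    and len: "\<And>r. r \<in> max_runs X \<Longrightarrow> snd (\<psi> r) - fst (\<psi> r) = snd r - fst r"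
begin

lemma run_shift_mem:
  assumes "x \<in> X"
  shows "run_shift X \<psi> x \<in> X'" "run_of X' (run_shift X \<psi> x) = \<psi> (run_of X x)"
proof -
  let ?r = "run_of X x"
  have r: "?r \<in> max_runs X" "fst ?r \<le> x" "x \<le> snd ?r"
    using run_of_in_max_runs[OF fin(1) pos(1) assms] run_of_bounds[OF fin(1) pos(1) assms] by auto
  have r': "\<psi> ?r \<in> max_runs X'"
    using \<psi> r(1) by (simp add: bij_betwE)
  have bounds: "fst (\<psi> ?r) \<le> run_shift X \<psi> x" "run_shift X \<psi> x \<le> snd (\<psi> ?r)"
    using len[OF r(1)] r max_runsD(1)[OF r'] by (auto simp: run_shift_def)
  then show "run_shift X \<psi> x \<in> X'"
    using max_runsD(2)[OF r'] by auto
  show "run_of X' (run_shift X \<psi> x) = \<psi> ?r"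
    using bounds by (rule run_of_eq[OF r'])
qed

lemma run_of_eq_if_run_shift:
  assumes "x \<in> X" "y \<in> X" "run_of X' (run_shift X \<psi> x) = run_of X' (run_shift X \<psi> y)"
  shows "run_of X x = run_of X y"
proof -
  have "\<psi> (run_of X x) = \<psi> (run_of X y)"
    using run_shift_mem(2)[OF assms(1)] run_shift_mem(2)[OF assms(2)] assms(3) by simp
  then show ?thesis
    using inj_onD[OF bij_betw_imp_inj_on[OF \<psi>]] run_of_in_max_runs[OF fin(1) pos(1)] assms(1,2)
    by blast
qed

lemma bij_betw_run_shift: "bij_betw (run_shift X \<psi>) X X'"
  unfolding bij_betw_def
proof
  show "inj_on (run_shift X \<psi>) X"
  proof
    fix x y assume xy: "x \<in> X" "y \<in> X" "run_shift X \<psi> x = run_shift X \<psi> y"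
    then have "run_of X x = run_of X y"
      by (intro run_of_eq_if_run_shift) simp_all
    then show "x = y"
      using xy(3) run_of_bounds(1)[OF fin(1) pos(1) xy(1)] run_of_bounds(1)[OF fin(1) pos(1) xy(2)]
      by (simp add: run_shift_def)
  qed
  show "run_shift X \<psi> ` X = X'"
  proof (intro equalityI subsetI)
    fix w assume "w \<in> run_shift X \<psi> ` X"
    then show "w \<in> X'"
      using run_shift_mem(1) by blast
  next
    fix w assume w: "w \<in> X'"
    let ?r' = "run_of X' w"
    have r': "?r' \<in> max_runs X'" "fst ?r' \<le> w" "w \<le> snd ?r'"
      using run_of_in_max_runs[OF fin(2) pos(2) w] run_of_bounds[OF fin(2) pos(2) w] by auto
    have "?r' \<in> \<psi> ` max_runs X"
      using \<psi> r'(1) by (simp add: bij_betw_def)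
    then obtain r where r: "r \<in> max_runs X" "\<psi> r = ?r'"
      by (elim imageE) simp
    define x where "x = fst r + (w - fst ?r')"
    have "fst r \<le> x" "x \<le> snd r"
      using len[OF r(1)] r' r(2) max_runsD(1)[OF r(1)] by (auto simp: x_def)
    then have "x \<in> X" "run_of X x = r"
      using max_runsD(2)[OF r(1)] run_of_eq[OF r(1)] by auto
    moreover have "run_shift X \<psi> x = w"
      using \<open>run_of X x = r\<close> r(2) r'(2) by (simp add: run_shift_def x_def)
    ultimately show "w \<in> run_shift X \<psi> ` X"
      by (blast intro: rev_image_eqI)
  qed
qed

lemma preserves_succ_run_shift: "preserves_succ (run_shift X \<psi>) X"
  unfolding preserves_succ_def
proof (intro ballI iffI)
  fix x y assume xy: "x \<in> X" "y \<in> X" "y = Suc x"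
  then show "run_shift X \<psi> y = Suc (run_shift X \<psi> x)"
    using run_of_bounds(1)[OF fin(1) pos(1) xy(1)] run_of_Suc[OF fin(1) pos(1) xy(1)]
    by (simp add: run_shift_def)
next
  fix x y assume xy: "x \<in> X" "y \<in> X" "run_shift X \<psi> y = Suc (run_shift X \<psi> x)"
  then have "run_of X' (run_shift X \<psi> y) = run_of X' (run_shift X \<psi> x)"
    using run_shift_mem[OF xy(1)] run_shift_mem[OF xy(2)] run_of_Suc[OF fin(2) pos(2)] by metis
  then have "run_of X y = run_of X x"
    using xy(1,2) by (intro run_of_eq_if_run_shift) simp_all
  then show "y = Suc x"
    using xy(3) run_of_bounds(1)[OF fin(1) pos(1) xy(1)] run_of_bounds(1)[OF fin(1) pos(1) xy(2)]
    by (simp add: run_shift_def)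
qed

end

lemma exists_succ_preserving_bij:
  assumes fin: "finite X" "finite X'" and pos: "0 \<notin> X" "0 \<notin> X'"
    and "run_lengths X = run_lengths X'"
  obtains \<phi> where "bij_betw \<phi> X X'" "preserves_succ \<phi> X"
proof -
  let ?len = "\<lambda>(a::nat, b::nat). b - a + 1"
  obtain \<psi> where \<psi>: "bij_betw \<psi> (max_runs X) (max_runs X')" "\<forall>r\<in>max_runs X. ?len (\<psi> r) = ?len r"
    using bij_betw_if_image_mset_eq[OF finite_max_runs[OF fin(1)] finite_max_runs[OF fin(2)],
        of ?len ?len]
      assms(5) by (auto simp: run_lengths_def)
  have len: "snd (\<psi> r) - fst (\<psi> r) = snd r - fst r" if "r \<in> max_runs X" for r
    using \<psi>(2) that max_runsD(1)[OF that] max_runsD(1)[OF bij_betw_apply[OF \<psi>(1) that]]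
    by (auto simp: split_beta)
  show thesis
    using bij_betw_run_shift[OF fin pos \<psi>(1) len] preserves_succ_run_shift[OF fin pos \<psi>(1) len]
    by (rule that)
qed

lemma preserves_succ_shift:
  assumes succ: "preserves_succ \<phi> X" and "{a..b} \<subseteq> X" "t \<le> b - a"
  shows "\<phi> (a + t) = \<phi> a + t"
  using assms(3)
proof (induction t)
  case (Suc t)
  have "{a + t, Suc (a + t)} \<subseteq> {a..b}"
    using Suc.prems by auto
  then have "a + t \<in> X" "Suc (a + t) \<in> X"
    using assms(2) by blast+
  then have "\<phi> (Suc (a + t)) = Suc (\<phi> (a + t))"
    using succ unfolding preserves_succ_def by blast
  then show ?case
    using Suc by simp
qed simp

lemma preserves_succ_max_runs:
  assumes succ: "preserves_succ \<phi> X" and "Y \<subseteq> X" and pos: "0 \<notin> \<phi> ` X"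
    and run: "(a, b) \<in> max_runs Y"
  shows "(\<phi> a, \<phi> b) \<in> max_runs (\<phi> ` Y)" "\<phi> b - \<phi> a = b - a"
proof -
  have ab: "a \<le> b" "{a..b} \<subseteq> Y" "a - 1 \<notin> Y" "b + 1 \<notin> Y"
    using run by (simp_all add: max_runs_def)
  have shift: "\<phi> (a + t) = \<phi> a + t" if "t \<le> b - a" for t
    using preserves_succ_shift[OF succ] ab(2) \<open>Y \<subseteq> X\<close> that by blast
  have \<phi>b: "\<phi> b = \<phi> a + (b - a)"
    using shift[of "b - a"] ab(1) by simp
  then show "\<phi> b - \<phi> a = b - a"
    by simp
  have "{\<phi> a..\<phi> b} \<subseteq> \<phi> ` Y"
  proof
    fix w assume w: "w \<in> {\<phi> a..\<phi> b}"
    then have "w = \<phi> (a + (w - \<phi> a))" "a + (w - \<phi> a) \<in> {a..b}"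
      using shift[of "w - \<phi> a"] \<phi>b ab(1) by auto
    then show "w \<in> \<phi> ` Y"
      using ab(2) by blast
  qed
  moreover have "\<phi> a - 1 \<notin> \<phi> ` Y"
  proof
    assume "\<phi> a - 1 \<in> \<phi> ` Y"
    then obtain x where x: "x \<in> Y" "\<phi> x = \<phi> a - 1"
      by auto
    have "a \<in> X"
      using ab(1,2) \<open>Y \<subseteq> X\<close> by auto
    then have "\<phi> a \<noteq> 0"
      using pos by (metis image_eqI)
    then have "\<phi> a = Suc (\<phi> x)"
      using x(2) by simp
    then have "a = Suc x"
      using succ x(1) \<open>a \<in> X\<close> \<open>Y \<subseteq> X\<close> unfolding preserves_succ_def by blast
    then show False
      using ab(3) x(1) by simp
  qed
  moreover have "\<phi> b + 1 \<notin> \<phi> ` Y"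
  proof
    assume "\<phi> b + 1 \<in> \<phi> ` Y"
    then obtain x where x: "x \<in> Y" "\<phi> x = Suc (\<phi> b)"
      by auto
    have "b \<in> X"
      using ab(1,2) \<open>Y \<subseteq> X\<close> by auto
    then have "x = Suc b"
      using succ x \<open>Y \<subseteq> X\<close> unfolding preserves_succ_def by blast
    then show False
      using ab(4) x(1) by simp
  qed
  ultimately show "(\<phi> a, \<phi> b) \<in> max_runs (\<phi> ` Y)"
    using \<phi>b by (simp add: max_runs_def)
qed

lemma preserves_succ_inv:
  assumes "bij_betw \<phi> X X'" "preserves_succ \<phi> X"
  shows "preserves_succ (the_inv_into X \<phi>) X'"
  unfolding preserves_succ_def
proof (intro ballI)
  fix x' y' assume "x' \<in> X'" "y' \<in> X'"
  then obtain x y where xy: "x \<in> X" "y \<in> X" "x' = \<phi> x" "y' = \<phi> y"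
    using assms(1) by (auto simp: bij_betw_def)
  then have "the_inv_into X \<phi> x' = x" "the_inv_into X \<phi> y' = y"
    using the_inv_into_f_f[OF bij_betw_imp_inj_on[OF assms(1)]] by simp_all
  then show "y' = Suc x' \<longleftrightarrow> the_inv_into X \<phi> y' = Suc (the_inv_into X \<phi> x')"
    using assms(2) xy unfolding preserves_succ_def by simp
qed

lemma max_runs_image_preserves_succ:
  assumes bij: "bij_betw \<phi> X X'" and succ: "preserves_succ \<phi> X" and "Y \<subseteq> X"
    and pos: "0 \<notin> X" "0 \<notin> X'"
  shows "map_prod \<phi> \<phi> ` max_runs Y = max_runs (\<phi> ` Y)"
proof (intro equalityI subsetI)
  have \<phi>_pos: "0 \<notin> \<phi> ` X"
    using bij pos by (simp add: bij_betw_def)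
  fix p assume "p \<in> map_prod \<phi> \<phi> ` max_runs Y"
  then obtain a b where "(a, b) \<in> max_runs Y" "p = (\<phi> a, \<phi> b)"
    by auto
  then show "p \<in> max_runs (\<phi> ` Y)"
    using preserves_succ_max_runs(1)[OF succ \<open>Y \<subseteq> X\<close> \<phi>_pos] by simp
next
  define \<psi> where "\<psi> = the_inv_into X \<phi>"
  have inj: "inj_on \<phi> X"
    using bij by (rule bij_betw_imp_inj_on)
  have \<psi>: "bij_betw \<psi> X' X" "preserves_succ \<psi> X'"
    unfolding \<psi>_def using bij_betw_the_inv_into[OF bij] preserves_succ_inv[OF bij succ] by simp_all
  have \<psi>_pos: "0 \<notin> \<psi> ` X'"
    using \<psi>(1) pos by (simp add: bij_betw_def)
  have \<psi>_image: "\<psi> ` \<phi> ` Y = Y"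
    using the_inv_into_f_f[OF inj] \<open>Y \<subseteq> X\<close> by (force simp: image_comp \<psi>_def)
  have \<phi>Y: "\<phi> ` Y \<subseteq> X'"
    using bij \<open>Y \<subseteq> X\<close> by (auto simp: bij_betw_def)
  fix p assume p: "p \<in> max_runs (\<phi> ` Y)"
  obtain a' b' where ab': "p = (a', b')"
    by fastforce
  have "(\<psi> a', \<psi> b') \<in> max_runs Y"
    using preserves_succ_max_runs(1)[OF \<psi>(2) \<phi>Y \<psi>_pos, of a' b'] p ab' \<psi>_image by simp
  moreover have "a' \<in> \<phi> ` Y" "b' \<in> \<phi> ` Y"
    using max_runsD(1,2)[OF p] ab' by auto
  then have "p = map_prod \<phi> \<phi> (\<psi> a', \<psi> b')"
    using f_the_inv_into_f[OF inj] \<open>Y \<subseteq> X\<close> ab' by (auto simp: \<psi>_def)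
  ultimately show "p \<in> map_prod \<phi> \<phi> ` max_runs Y"
    by blast
qed

lemma run_lengths_image_preserves_succ:
  assumes bij: "bij_betw \<phi> X X'" and succ: "preserves_succ \<phi> X" and "Y \<subseteq> X" and "finite X"
    and pos: "0 \<notin> X" "0 \<notin> X'"
  shows "run_lengths (\<phi> ` Y) = run_lengths Y"
proof -
  have \<phi>_pos: "0 \<notin> \<phi> ` X"
    using bij pos by (simp add: bij_betw_def)
  have "max_runs Y \<subseteq> Y \<times> Y"
    by (auto simp: max_runs_def)
  then have "inj_on (map_prod \<phi> \<phi>) (max_runs Y)"
    using map_prod_inj_on[OF bij_betw_imp_inj_on[OF bij] bij_betw_imp_inj_on[OF bij]] \<open>Y \<subseteq> X\<close>
    by (meson inj_on_subset Sigma_mono)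
  then have "mset_set (max_runs (\<phi> ` Y)) = image_mset (map_prod \<phi> \<phi>) (mset_set (max_runs Y))"
    by (simp add: image_mset_mset_set max_runs_image_preserves_succ[OF assms(1-3) pos])
  then have "run_lengths (\<phi> ` Y) = image_mset (\<lambda>(a, b). \<phi> b - \<phi> a + 1) (mset_set (max_runs Y))"
    by (simp add: run_lengths_def multiset.map_comp comp_def split_def)
  also have "\<dots> = run_lengths Y"
    unfolding run_lengths_def
  proof (rule image_mset_cong)
    fix p assume "p \<in># mset_set (max_runs Y)"
    then have "p \<in> max_runs Y"
      using finite_max_runs[OF finite_subset[OF \<open>Y \<subseteq> X\<close> \<open>finite X\<close>]] by simp
    then show "(\<lambda>(a, b). \<phi> b - \<phi> a + 1) p = (\<lambda>(a, b). b - a + 1) p"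
      using preserves_succ_max_runs(2)[OF succ \<open>Y \<subseteq> X\<close> \<phi>_pos] by (cases p) simp
  qed
  finally show ?thesis .
qed

section \<open>Alternating sums\<close>

lemma run_invariant_alternating_sum:
  fixes f :: "nat set \<Rightarrow> 'a :: comm_ring_1"
  assumes "run_invariant m f"
  shows "run_invariant m (\<lambda>X. \<Sum>Y\<in>Pow X. (-1) ^ card Y * f Y)"
  unfolding run_invariant_def
proof (intro allI impI)
  fix X X' assume X: "X \<subseteq> {1..m}" "X' \<subseteq> {1..m}" "run_lengths X = run_lengths X'"
  then have fin: "finite X" "finite X'" and pos: "0 \<notin> X" "0 \<notin> X'"
    using finite_subset by auto
  obtain \<phi> where \<phi>: "bij_betw \<phi> X X'" "preserves_succ \<phi> X"
    using exists_succ_preserving_bij[OF fin pos X(3)] by blast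
  have "(\<Sum>Y\<in>Pow X'. (-1) ^ card Y * f Y) = (\<Sum>Y\<in>Pow X. (-1) ^ card (\<phi> ` Y) * f (\<phi> ` Y))"
    by (rule sum.reindex_bij_betw[OF bij_betw_Pow[OF \<phi>(1)], symmetric])
  also have "\<dots> = (\<Sum>Y\<in>Pow X. (-1) ^ card Y * f Y)"
  proof (rule sum.cong)
    fix Y assume "Y \<in> Pow X"
    then have Y: "Y \<subseteq> X" "\<phi> ` Y \<subseteq> X'"
      using \<phi>(1) by (auto simp: bij_betw_def)
    have "card (\<phi> ` Y) = card Y"
      using card_image[OF inj_on_subset[OF bij_betw_imp_inj_on[OF \<phi>(1)] Y(1)]] .
    moreover have "f (\<phi> ` Y) = f Y"
      using assms run_lengths_image_preserves_succ[OF \<phi> Y(1) fin(1) pos] Y X(1,2)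
      unfolding run_invariant_def by (meson subset_trans)
    ultimately show "(-1) ^ card (\<phi> ` Y) * f (\<phi> ` Y) = (-1) ^ card Y * f Y"
      by simp
  qed simp
  finally show "(\<Sum>Y\<in>Pow X. (-1) ^ card Y * f Y) = (\<Sum>Y\<in>Pow X'. (-1) ^ card Y * f Y)"
    by simp
qed

lemma run_invariant_iff_alternating_sum:
  fixes f g :: "nat set \<Rightarrow> 'a :: comm_ring_1"
  assumes g: "\<And>X. finite X \<Longrightarrow> g X = (\<Sum>Y\<in>Pow X. (-1) ^ card Y * f Y)"
  shows "run_invariant m f \<longleftrightarrow> run_invariant m g"
proof -
  have f: "f X = (\<Sum>Y\<in>Pow X. (-1) ^ card Y * g Y)" if "finite X" for X
    using inclusion_exclusion_symmetric[OF g that] .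
  have fin: "finite X" if "X \<subseteq> {1..m}" for X
    using that by (rule finite_subset) simp
  show ?thesis
  proof
    assume "run_invariant m f"
    then show "run_invariant m g"
      by (rule run_invariant_alternating_sum[THEN run_invariant_cong[THEN iffD1, rotated]])
        (simp add: g fin)
  next
    assume "run_invariant m g"
    then show "run_invariant m f"
      by (rule run_invariant_alternating_sum[THEN run_invariant_cong[THEN iffD1, rotated]])
        (simp add: f fin)
  qed
qed

lemma prod_of_bool:
  "finite A \<Longrightarrow> (\<Prod>i\<in>A. of_bool (Q i)) = (of_bool (\<forall>i\<in>A. Q i) :: 'a :: comm_semiring_1)"
  by (induction A rule: finite_induct) auto

lemma card_all_eq_alternating_sum:
  assumes "finite S" "finite I"
  shows "int (card {w \<in> S. \<forall>i \<in> I. P w i}) =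
         (\<Sum>Y\<in>Pow I. (-1) ^ card Y * int (card {w \<in> S. \<forall>i \<in> Y. \<not> P w i}))"
proof -
  have "(\<Prod>i\<in>I. 1 - of_bool (\<not> P w i) :: int) = (\<Prod>i\<in>I. of_bool (P w i))" for w
    by (rule prod.cong) auto
  then have "of_bool (\<forall>i\<in>I. P w i) = (\<Prod>i\<in>I. 1 - of_bool (\<not> P w i) :: int)" for w
    by (simp add: prod_of_bool[OF assms(2)])
  also have "\<dots> w = (\<Sum>Y\<in>Pow I. (-1) ^ card Y * (\<Prod>i\<in>Y. of_bool (\<not> P w i)) * (\<Prod>i\<in>I - Y. 1))" for w
    by (rule prod_diff_conv_sum[OF assms(2)])
  also have "\<dots> w = (\<Sum>Y\<in>Pow I. (-1) ^ card Y * of_bool (\<forall>i\<in>Y. \<not> P w i))" for w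
    by (intro sum.cong refl) (simp add: prod_of_bool finite_subset[OF _ assms(2)])
  finally have expand: "of_bool (\<forall>i\<in>I. P w i) =
      (\<Sum>Y\<in>Pow I. (-1) ^ card Y * of_bool (\<forall>i\<in>Y. \<not> P w i) :: int)" for w .
  have card_eq_sum: "int (card {w \<in> S. Q w}) = (\<Sum>w\<in>S. of_bool (Q w))" for Q :: "'a \<Rightarrow> bool"
    using assms(1) by (simp add: Int_def)
  have "int (card {w \<in> S. \<forall>i \<in> I. P w i}) =
      (\<Sum>w\<in>S. \<Sum>Y\<in>Pow I. (-1) ^ card Y * of_bool (\<forall>i\<in>Y. \<not> P w i))"
    by (simp add: card_eq_sum expand)
  also have "\<dots> = (\<Sum>Y\<in>Pow I. (-1) ^ card Y * (\<Sum>w\<in>S. of_bool (\<forall>i\<in>Y. \<not> P w i)))"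
    by (simp add: sum.swap[of _ S] sum_distrib_left)
  also have "\<dots> = (\<Sum>Y\<in>Pow I. (-1) ^ card Y * int (card {w \<in> S. \<forall>i \<in> Y. \<not> P w i}))"
    by (simp add: card_eq_sum)
  finally show ?thesis .
qed

lemma H_int_A_sets: "H_int S (A_sets n S) I = {w \<in> S. \<forall>i \<in> I. w (Suc i) < w i}"
  by (auto simp: H_int_def A_sets_def)

theorem proposition3p14:
  fixes n :: nat and S :: "(nat \<Rightarrow> nat) set"
  assumes "S \<subseteq> {p. p permutes {1..n}}"
  shows "symmetric_set n S \<longleftrightarrow> harmonic S (A_sets n S) (n - 1)"
proof -
  have "finite S"
    by (rule finite_subset[OF assms finite_permutations]) simp
  have "symmetric_set n S \<longleftrightarrow> run_invariant (n - 1) (\<lambda>J. card (no_descent_in S J))"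
    using \<open>finite S\<close> by (rule symmetric_set_iff_run_invariant)
  also have "\<dots> \<longleftrightarrow> run_invariant (n - 1) (\<lambda>J. int (card (no_descent_in S J)))"
    by (simp add: run_invariant_def)
  also have "\<dots> \<longleftrightarrow> run_invariant (n - 1) (\<lambda>I. int (card (H_int S (A_sets n S) I)))"
    using card_all_eq_alternating_sum[OF \<open>finite S\<close>, of _ "\<lambda>w i. w (Suc i) < w i"]
    by (intro run_invariant_iff_alternating_sum) (simp add: H_int_A_sets no_descent_in_def)
  also have "\<dots> \<longleftrightarrow> harmonic S (A_sets n S) (n - 1)"
    by (simp add: harmonic_iff_run_invariant run_invariant_def)
  finally show ?thesis .
qed

end
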